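(* Let integers $n \geq 0$, $m \geq 2$ and $k \geq 1$ be given, let $q=(q_1,\dots,q_m)$ be a probability distribution on $\{1,\dots,m\}$, and let $j \in \{1,\dots,m-1\}$. Define $q'$ by $q'_\ell = q_\ell$ for all $\ell \notin \{j,j+1\}$ and \[ q'_j = q_j + q_{j+1} - \|(q_j,q_{j+1})\|_k, \qquad q'_{j+1} = \|(q_j,q_{j+1})\|_k, \] where $\|(a,b)\|_k = (a^k+b^k)^{1/k}$. For a distribution $r$ on $\{1,\dots,m\}$ and $i \in \{1,\dots,m\}$, let $M^{r}_{i}$ denote the maximum load of any bin in $\{i,\dots,m\}$ when $n$ balls are thrown independently into the $m$ bins according to $r$. Then \[ \Pr[M^{q}_{j} < k] \leq \Pr[M^{q'}_{j+1} < k]. \]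
   Context: The load of a bin is the number of balls that landed in it. *)

theory Defs
  imports "HOL-Library.FuncSet" Complex_Main
begin

text \<open>An outcome of throwing n balls into bins 1..m is a map from balls {0..<n} to bins.\<close>

definition load :: "nat \<Rightarrow> (nat \<Rightarrow> nat) \<Rightarrow> nat \<Rightarrow> nat" where
  "load n f b = card {t \<in> {..<n}. f t = b}"

definition max_load_from :: "nat \<Rightarrow> nat \<Rightarrow> (nat \<Rightarrow> nat) \<Rightarrow> nat \<Rightarrow> nat" where
  "max_load_from n m f i = Max (load n f ` {i..m})"

definition balls_prob :: "nat \<Rightarrow> nat \<Rightarrow> (nat \<Rightarrow> real) \<Rightarrow> ((nat \<Rightarrow> nat) \<Rightarrow> bool) \<Rightarrow> real" where
  "balls_prob n m r P = (\<Sum>f \<in> {..<n} \<rightarrow>\<^sub>E {1..m}. if P f then (\<Prod>t<n. r (f t)) else 0)"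

definition knorm :: "nat \<Rightarrow> real \<Rightarrow> real \<Rightarrow> real" where
  "knorm k a b = root k (a ^ k + b ^ k)"

definition merge_dist :: "nat \<Rightarrow> nat \<Rightarrow> (nat \<Rightarrow> real) \<Rightarrow> nat \<Rightarrow> real" where
  "merge_dist k j q = (\<lambda>l. if l = j then q j + q (j+1) - knorm k (q j) (q (j+1))
                          else if l = j + 1 then knorm k (q j) (q (j+1))
                          else q l)"

end

theory Submission
  imports Defs
begin

text \<open>Condition on where the balls outside bins \<open>j\<close> and \<open>j + 1\<close> land. The \<open>s\<close> balls in these
  two bins then split binomially, with weights \<open>b = q (j + 1)\<close>, \<open>a = q j\<close> under \<open>q\<close> and
  \<open>c = knorm k a b\<close>, \<open>d = a + b - c\<close> under the merged distribution; the other bins are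
  unaffected. Counting by the trial at which the \<open>k\<close>-th success occurs, the weight of at least
  \<open>k\<close> successes is \<open>x ^ k * N y\<close> with \<open>N = tail_cofactor k (x + y)\<close>, which for fixed
  \<open>x + y = a + b\<close> is increasing in the failure weight \<open>y\<close>. So under \<open>q\<close> both bins stay below \<open>k\<close> with weight
  \<open>(a + b) ^ s - b ^ k * N a - a ^ k * N b\<close>, under the merged distribution bin \<open>j + 1\<close> stays
  below \<open>k\<close> with weight \<open>(a + b) ^ s - (a ^ k + b ^ k) * N d\<close>, and \<open>d \<le> a, b\<close> compares the two.\<close>

definition binomial_sum :: "nat \<Rightarrow> 'a::comm_semiring_1 \<Rightarrow> 'a \<Rightarrow> (nat \<Rightarrow> bool) \<Rightarrow> 'a" where
  "binomial_sum s x y P = (\<Sum>i\<le>s. if P i then of_nat (s choose i) * x ^ i * y ^ (s - i) else 0)"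

lemma binomial_sum_True: "binomial_sum s x y (\<lambda>_. True) = (x + y) ^ s"
  by (simp add: binomial_sum_def binomial_ring)

lemma binomial_sum_nonneg:
  fixes x y :: "'a::linordered_semidom"
  assumes "0 \<le> x" "0 \<le> y"
  shows "binomial_sum s x y P \<ge> 0"
  unfolding binomial_sum_def using assms by (intro sum_nonneg) auto

lemma binomial_sum_eq_index:
  "binomial_sum s x y (\<lambda>i. i = p) = (if p \<le> s then of_nat (s choose p) * x ^ p * y ^ (s - p) else 0)"
  unfolding binomial_sum_def by (simp add: sum.delta' cong: if_cong)

lemma binomial_sum_disjoint_disj:
  assumes "\<And>i. i \<le> s \<Longrightarrow> P i \<longleftrightarrow> Q i \<or> R i" and "\<And>i. i \<le> s \<Longrightarrow> \<not> (Q i \<and> R i)"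
  shows "binomial_sum s x y P = binomial_sum s x y Q + binomial_sum s x y R"
  unfolding binomial_sum_def sum.distrib[symmetric] using assms by (intro sum.cong) auto

lemma binomial_sum_reflect: "binomial_sum s x y (\<lambda>i. P (s - i)) = binomial_sum s y x P"
proof -
  have "binomial_sum s x y (\<lambda>i. P (s - i))
      = (\<Sum>i\<le>s. (\<lambda>i. if P i then of_nat (s choose i) * y ^ i * x ^ (s - i) else 0) (s - i))"
    unfolding binomial_sum_def
    by (rule sum.cong) (auto simp: binomial_symmetric[symmetric] algebra_simps)
  also have "\<dots> = binomial_sum s y x P"
    unfolding binomial_sum_def
    by (rule sum.reindex_bij_witness[where i="\<lambda>i. s - i" and j="\<lambda>i. s - i"]) auto
  finally show ?thesis .
qed

lemma binomial_sum_Suc: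
  "binomial_sum (Suc s) x y P = x * binomial_sum s x y (\<lambda>i. P (Suc i)) + y * binomial_sum s x y P"
proof -
  define u where "u i = (if P i then of_nat (s choose i) * x ^ i * y ^ (Suc s - i) else 0)" for i
  have "y * binomial_sum s x y P = (\<Sum>i\<le>s. u i)"
    unfolding binomial_sum_def u_def sum_distrib_left
    by (rule sum.cong) (auto simp: Suc_diff_le algebra_simps)
  also have "\<dots> = (\<Sum>i\<le>Suc s. u i)"
    by (simp add: u_def binomial_eq_0)
  also have "\<dots> = u 0 + (\<Sum>i\<le>s. u (Suc i))"
    by (rule sum.atMost_Suc_shift)
  finally have y_part: "y * binomial_sum s x y P = u 0 + (\<Sum>i\<le>s. u (Suc i))" .
  have x_part: "x * binomial_sum s x y (\<lambda>i. P (Suc i))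
      = (\<Sum>i\<le>s. if P (Suc i) then of_nat (s choose i) * x ^ Suc i * y ^ (s - i) else 0)"
    unfolding binomial_sum_def sum_distrib_left by (rule sum.cong) (auto simp: algebra_simps)
  have "binomial_sum (Suc s) x y P = (if P 0 then y ^ Suc s else 0) +
      (\<Sum>i\<le>s. if P (Suc i) then of_nat (Suc s choose Suc i) * x ^ Suc i * y ^ (s - i) else 0)"
    unfolding binomial_sum_def by (subst sum.atMost_Suc_shift, intro arg_cong2[where f="(+)"] sum.cong) auto
  also have "(\<Sum>i\<le>s. if P (Suc i) then of_nat (Suc s choose Suc i) * x ^ Suc i * y ^ (s - i) else 0)
      = (\<Sum>i\<le>s. if P (Suc i) then of_nat (s choose i) * x ^ Suc i * y ^ (s - i) else 0)
        + (\<Sum>i\<le>s. u (Suc i))"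
    unfolding sum.distrib[symmetric] u_def by (rule sum.cong) (auto simp: algebra_simps)
  finally show ?thesis unfolding y_part x_part by (simp add: u_def algebra_simps)
qed

primrec tail_cofactor :: "nat \<Rightarrow> 'a::comm_semiring_1 \<Rightarrow> 'a \<Rightarrow> nat \<Rightarrow> 'a" where
  "tail_cofactor k t y 0 = 0"
| "tail_cofactor k t y (Suc s) =
     t * tail_cofactor k t y s + (if k \<le> Suc s then of_nat (s choose (k - 1)) * y ^ (Suc s - k) else 0)"

lemma tail_cofactor_mono:
  fixes t y y' :: "'a::linordered_semidom"
  assumes "0 \<le> t" "0 \<le> y" "y \<le> y'"
  shows "tail_cofactor k t y s \<le> tail_cofactor k t y' s"
proof (induction s)
  case (Suc s)
  have "y ^ (Suc s - k) \<le> y' ^ (Suc s - k)"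
    using assms by (simp add: power_mono)
  with Suc.IH assms show ?case
    by (auto intro!: add_mono mult_left_mono)
qed simp

lemma binomial_sum_at_least:
  assumes "1 \<le> k"
  shows "binomial_sum s x y (\<lambda>i. k \<le> i) = x ^ k * tail_cofactor k (x + y) y s"
proof (induction s)
  case 0
  show ?case using assms by (simp add: binomial_sum_def)
next
  case (Suc s)
  have last_success: "x * binomial_sum s x y (\<lambda>i. i = k - 1)
      = x ^ k * (if k \<le> Suc s then of_nat (s choose (k - 1)) * y ^ (Suc s - k) else 0)"
  proof -
    have "x ^ k = x * x ^ (k - 1)"
      using assms by (simp add: power_Suc[symmetric])
    moreover have "Suc s - k = s - (k - 1)"
      using assms by simp
    ultimately show ?thesis
      unfolding binomial_sum_eq_index using assms by (auto simp: mult_ac)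
  qed
  have "binomial_sum s x y (\<lambda>i. k \<le> Suc i)
      = binomial_sum s x y (\<lambda>i. k \<le> i) + binomial_sum s x y (\<lambda>i. i = k - 1)"
    using assms by (intro binomial_sum_disjoint_disj) auto
  then have "binomial_sum (Suc s) x y (\<lambda>i. k \<le> i)
      = (x + y) * binomial_sum s x y (\<lambda>i. k \<le> i) + x * binomial_sum s x y (\<lambda>i. i = k - 1)"
    by (simp add: binomial_sum_Suc algebra_simps)
  then show ?case
    unfolding Suc.IH last_success by (simp add: algebra_simps)
qed

lemma binomial_sum_both_below_le:
  fixes a b c d :: real
  assumes "1 \<le> k" "0 \<le> a" "0 \<le> b" "0 \<le> d" "d \<le> a" "d \<le> b"
    and "c + d = a + b" "c ^ k = a ^ k + b ^ k"
  shows "binomial_sum s b a (\<lambda>i. s - i < k \<and> i < k) \<le> binomial_sum s c d (\<lambda>i. i < k)"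
proof (cases "2 * k \<le> s + 1")
  case True
  then have "binomial_sum s b a (\<lambda>i. s - i < k \<and> i < k) = 0"
    unfolding binomial_sum_def by (intro sum.neutral) auto
  moreover have "0 \<le> c" using assms by linarith
  ultimately show ?thesis using assms by (simp add: binomial_sum_nonneg)
next
  case False
  let ?N = "tail_cofactor k (a + b)"
  have "(b + a) ^ s = binomial_sum s b a (\<lambda>i. s - i < k \<and> i < k)
      + binomial_sum s b a (\<lambda>i. k \<le> i \<or> k \<le> s - i)"
    unfolding binomial_sum_True[symmetric] by (rule binomial_sum_disjoint_disj) auto
  also have "binomial_sum s b a (\<lambda>i. k \<le> i \<or> k \<le> s - i)
      = binomial_sum s b a (\<lambda>i. k \<le> i) + binomial_sum s a b (\<lambda>i. k \<le> i)"
    using False by (subst binomial_sum_reflect[symmetric], intro binomial_sum_disjoint_disj) auto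
  finally have lhs: "binomial_sum s b a (\<lambda>i. s - i < k \<and> i < k)
      = (a + b) ^ s - b ^ k * ?N a s - a ^ k * ?N b s"
    by (simp add: binomial_sum_at_least[OF assms(1)] algebra_simps)
  have "(c + d) ^ s = binomial_sum s c d (\<lambda>i. i < k) + binomial_sum s c d (\<lambda>i. k \<le> i)"
    unfolding binomial_sum_True[symmetric] by (rule binomial_sum_disjoint_disj) auto
  then have rhs: "binomial_sum s c d (\<lambda>i. i < k) = (a + b) ^ s - (a ^ k + b ^ k) * ?N d s"
    using assms(7,8) by (simp add: binomial_sum_at_least[OF assms(1)])
  have "(a ^ k + b ^ k) * ?N d s \<le> a ^ k * ?N b s + b ^ k * ?N a s"
    unfolding distrib_right
    using assms by (intro add_mono mult_left_mono tail_cofactor_mono) auto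
  then show ?thesis unfolding lhs rhs by simp
qed

lemma sum_Pow_card:
  fixes h :: "nat \<Rightarrow> 'a::comm_semiring_1"
  assumes "finite S"
  shows "(\<Sum>T\<in>Pow S. h (card T)) = (\<Sum>i\<le>card S. of_nat (card S choose i) * h i)"
proof -
  have "(\<Sum>T\<in>Pow S. h (card T)) = (\<Sum>i\<le>card S. \<Sum>T\<in>{T\<in>Pow S. card T = i}. h (card T))"
    using assms by (intro sum.group[symmetric]) (auto intro: card_mono)
  also have "\<dots> = (\<Sum>i\<le>card S. of_nat (card S choose i) * h i)"
  proof (rule sum.cong)
    fix i
    have "card {T\<in>Pow S. card T = i} = card S choose i"
      using n_subsets[OF assms] by (simp add: Pow_def)
    then show "(\<Sum>T\<in>{T\<in>Pow S. card T = i}. h (card T)) = of_nat (card S choose i) * h i"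
      by simp
  qed simp
  finally show ?thesis .
qed

definition shift_to_next :: "nat \<Rightarrow> (nat \<Rightarrow> nat) \<Rightarrow> nat set \<Rightarrow> nat \<Rightarrow> nat" where
  "shift_to_next j g T = (\<lambda>t. if t \<in> T then j + 1 else g t)"

lemma bij_betw_shift_to_next:
  assumes "j \<in> B" "j + 1 \<in> B"
  shows "bij_betw (\<lambda>(g, T). shift_to_next j g T)
    (SIGMA g:{..<n} \<rightarrow>\<^sub>E (B - {j + 1}). Pow {t\<in>{..<n}. g t = j}) ({..<n} \<rightarrow>\<^sub>E B)"
    (is "bij_betw ?shift ?pairs _")
proof -
  define unshift where
    "unshift f = (\<lambda>t. if t < n \<and> f t = j + 1 then j else f t, {t\<in>{..<n}. f t = j + 1})" for f
  have pair_cases: "(\<And>g T. p = (g, T) \<Longrightarrow> T \<subseteq> {t\<in>{..<n}. g t = j} \<Longrightarrow>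
      g \<in> {..<n} \<rightarrow>\<^sub>E B \<Longrightarrow> \<forall>t<n. g t \<noteq> j + 1 \<Longrightarrow> g \<in> extensional {..<n} \<Longrightarrow> P) \<Longrightarrow> P"
    if "p \<in> ?pairs" for p P
    using that by (auto simp: PiE_iff)
  show ?thesis
  proof (rule bij_betw_byWitness[where f'=unshift])
    show "\<forall>p\<in>?pairs. unshift (?shift p) = p"
    proof
      fix p assume "p \<in> ?pairs"
      then show "unshift (?shift p) = p"
        by (rule pair_cases) (auto simp: unshift_def shift_to_next_def fun_eq_iff)
    qed
    show "\<forall>f\<in>{..<n} \<rightarrow>\<^sub>E B. ?shift (unshift f) = f"
      by (auto simp: unshift_def shift_to_next_def fun_eq_iff)
    show "?shift ` ?pairs \<subseteq> {..<n} \<rightarrow>\<^sub>E B"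
    proof
      fix f assume "f \<in> ?shift ` ?pairs"
      then obtain p where "p \<in> ?pairs" "f = ?shift p" by blast
      from this(1) show "f \<in> {..<n} \<rightarrow>\<^sub>E B"
        by (rule pair_cases)
          (use \<open>f = ?shift p\<close> assms(2) in \<open>auto simp: shift_to_next_def PiE_iff extensional_def\<close>)
    qed
    show "unshift ` ({..<n} \<rightarrow>\<^sub>E B) \<subseteq> ?pairs"
    proof
      fix p assume "p \<in> unshift ` ({..<n} \<rightarrow>\<^sub>E B)"
      then obtain f where f: "f \<in> {..<n} \<rightarrow>\<^sub>E B" and p: "p = unshift f" by blast
      have "(\<lambda>t. if t < n \<and> f t = j + 1 then j else f t) \<in> {..<n} \<rightarrow>\<^sub>E (B - {j + 1})"
        using f assms(1) by (auto simp: PiE_iff extensional_def)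
      then show "p \<in> ?pairs"
        unfolding p unshift_def by auto
    qed
  qed
qed

lemma sum_PiE_eq_sum_shift_to_next:
  assumes "finite B" "j \<in> B" "j + 1 \<in> B"
  shows "(\<Sum>f\<in>{..<n} \<rightarrow>\<^sub>E B. F f) =
    (\<Sum>g\<in>{..<n} \<rightarrow>\<^sub>E (B - {j + 1}). \<Sum>T\<in>Pow {t\<in>{..<n}. g t = j}. F (shift_to_next j g T))"
proof -
  have "(\<Sum>f\<in>{..<n} \<rightarrow>\<^sub>E B. F f)
      = (\<Sum>(g, T)\<in>(SIGMA g:{..<n} \<rightarrow>\<^sub>E (B - {j + 1}). Pow {t\<in>{..<n}. g t = j}). F (shift_to_next j g T))"
    using sum.reindex_bij_betw[OF bij_betw_shift_to_next[OF assms(2,3)], of F]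
    by (simp add: split_beta)
  also have "\<dots> = (\<Sum>g\<in>{..<n} \<rightarrow>\<^sub>E (B - {j + 1}). \<Sum>T\<in>Pow {t\<in>{..<n}. g t = j}. F (shift_to_next j g T))"
    using assms(1) by (subst sum.Sigma) (auto intro: finite_PiE)
  finally show ?thesis .
qed

lemma load_shift_to_next:
  assumes "T \<subseteq> {t\<in>{..<n}. g t = j}" "\<forall>t<n. g t \<noteq> j + 1"
  shows "load n (shift_to_next j g T) b =
    (if b = j + 1 then card T else if b = j then load n g j - card T else load n g b)"
proof -
  have "finite T" using assms(1) by (rule finite_subset) simp
  have "{t\<in>{..<n}. shift_to_next j g T t = b} =
    (if b = j + 1 then T else if b = j then {t\<in>{..<n}. g t = j} - T else {t\<in>{..<n}. g t = b})"
    using assms unfolding shift_to_next_def by auto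
  then show ?thesis
    using assms(1) \<open>finite T\<close> by (simp add: load_def card_Diff_subset)
qed

lemma prod_shift_to_next:
  assumes "T \<subseteq> {t\<in>{..<n}. g t = j}"
  shows "(\<Prod>t<n. r (shift_to_next j g T t)) =
    (\<Prod>t\<in>{t\<in>{..<n}. g t \<noteq> j}. r (g t)) * r j ^ (load n g j - card T) * r (j + 1) ^ card T"
proof -
  let ?f = "shift_to_next j g T" and ?S = "{t\<in>{..<n}. g t = j}"
  have "finite T" using assms by (rule finite_subset) simp
  have "(\<Prod>t<n. r (?f t)) = (\<Prod>t\<in>{..<n} - ?S. r (?f t)) * (\<Prod>t\<in>?S. r (?f t))"
    by (subst prod.subset_diff[of ?S]) auto
  also have "(\<Prod>t\<in>?S. r (?f t)) = (\<Prod>t\<in>?S - T. r (?f t)) * (\<Prod>t\<in>T. r (?f t))"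
    using assms by (subst prod.subset_diff[of T]) auto
  also have "(\<Prod>t\<in>{..<n} - ?S. r (?f t)) = (\<Prod>t\<in>{t\<in>{..<n}. g t \<noteq> j}. r (g t))"
    using assms by (intro prod.cong) (auto simp: shift_to_next_def)
  also have "(\<Prod>t\<in>?S - T. r (?f t)) = r j ^ card (?S - T)"
    by (auto simp: shift_to_next_def)
  also have "(\<Prod>t\<in>T. r (?f t)) = r (j + 1) ^ card T"
    by (simp add: shift_to_next_def)
  finally show ?thesis
    using assms \<open>finite T\<close> by (simp add: load_def card_Diff_subset mult.assoc)
qed

lemma sum_Pow_shift_to_next:
  fixes r :: "nat \<Rightarrow> 'a::comm_semiring_1"
  assumes no_next: "\<forall>t<n. g t \<noteq> j + 1"
    and R_local: "\<And>f f'. (\<And>b. b \<noteq> j \<Longrightarrow> b \<noteq> j + 1 \<Longrightarrow> load n f b = load n f' b) \<Longrightarrow> R f = R f'"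
  shows "(\<Sum>T\<in>Pow {t\<in>{..<n}. g t = j}.
      if R (shift_to_next j g T) \<and>
         Q (load n (shift_to_next j g T) j) (load n (shift_to_next j g T) (j + 1))
      then \<Prod>t<n. r (shift_to_next j g T t) else 0)
    = (if R g then (\<Prod>t\<in>{t\<in>{..<n}. g t \<noteq> j}. r (g t))
         * binomial_sum (load n g j) (r (j + 1)) (r j) (\<lambda>i. Q (load n g j - i) i) else 0)"
proof -
  let ?S = "{t\<in>{..<n}. g t = j}" and ?W = "\<Prod>t\<in>{t\<in>{..<n}. g t \<noteq> j}. r (g t)"
  define h where "h i = (if R g \<and> Q (load n g j - i) i
    then ?W * r j ^ (load n g j - i) * r (j + 1) ^ i else 0)" for i
  have "(\<Sum>T\<in>Pow ?S. if R (shift_to_next j g T) \<and>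
         Q (load n (shift_to_next j g T) j) (load n (shift_to_next j g T) (j + 1))
      then \<Prod>t<n. r (shift_to_next j g T t) else 0) = (\<Sum>T\<in>Pow ?S. h (card T))"
  proof (rule sum.cong)
    fix T assume "T \<in> Pow ?S"
    then have T: "T \<subseteq> ?S" by simp
    have "R (shift_to_next j g T) = R g"
      by (rule R_local) (simp add: load_shift_to_next[OF T no_next])
    then show "(if R (shift_to_next j g T) \<and>
         Q (load n (shift_to_next j g T) j) (load n (shift_to_next j g T) (j + 1))
      then \<Prod>t<n. r (shift_to_next j g T t) else 0) = h (card T)"
      unfolding h_def by (simp add: load_shift_to_next[OF T no_next] prod_shift_to_next[OF T])
  qed simp
  also have "\<dots> = (\<Sum>i\<le>load n g j. of_nat (load n g j choose i) * h i)"
    by (subst sum_Pow_card) (simp_all add: load_def)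
  also have "\<dots> = (if R g then ?W * binomial_sum (load n g j) (r (j + 1)) (r j) (\<lambda>i. Q (load n g j - i) i) else 0)"
    unfolding h_def binomial_sum_def sum_distrib_left by (auto intro!: sum.cong simp: mult_ac)
  finally show ?thesis .
qed

lemma balls_prob_condition_on_pair:
  fixes r :: "nat \<Rightarrow> real"
  assumes "1 \<le> j" "j + 1 \<le> m"
    and "\<And>f f'. (\<And>b. b \<noteq> j \<Longrightarrow> b \<noteq> j + 1 \<Longrightarrow> load n f b = load n f' b) \<Longrightarrow> R f = R f'"
  shows "balls_prob n m r (\<lambda>f. R f \<and> Q (load n f j) (load n f (j + 1)))
    = (\<Sum>g\<in>{..<n} \<rightarrow>\<^sub>E ({1..m} - {j + 1}). if R g then (\<Prod>t\<in>{t\<in>{..<n}. g t \<noteq> j}. r (g t))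
         * binomial_sum (load n g j) (r (j + 1)) (r j) (\<lambda>i. Q (load n g j - i) i) else 0)"
proof -
  have no_next: "\<forall>t<n. g t \<noteq> j + 1" if "g \<in> {..<n} \<rightarrow>\<^sub>E ({1..m} - {j + 1})" for g
    using that by (auto simp: PiE_iff)
  show ?thesis
    unfolding balls_prob_def
  proof (subst sum_PiE_eq_sum_shift_to_next[of "{1..m}" j])
    show "finite {1..m}" "j \<in> {1..m}" "j + 1 \<in> {1..m}"
      using assms(1,2) by auto
  qed (intro sum.cong refl sum_Pow_shift_to_next[OF no_next assms(3)])
qed

lemma max_load_from_less_iff:
  "i \<le> m \<Longrightarrow> max_load_from n m f i < k \<longleftrightarrow> (\<forall>b\<in>{i..m}. load n f b < k)"
  unfolding max_load_from_def by (subst Max_less_iff) auto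

lemma add_power_le_power_add:
  fixes a b :: "'a::linordered_semidom"
  assumes "0 \<le> a" "0 \<le> b" "1 \<le> k"
  shows "a ^ k + b ^ k \<le> (a + b) ^ k"
  using assms(3)
proof (induction k rule: dec_induct)
  case (step p)
  have "a ^ Suc p + b ^ Suc p \<le> a ^ Suc p + b ^ Suc p + (a * b ^ p + b * a ^ p)"
    using assms(1,2) by simp
  also have "\<dots> = (a + b) * (a ^ p + b ^ p)"
    by (simp add: algebra_simps)
  also have "\<dots> \<le> (a + b) * (a + b) ^ p"
    using step.IH assms(1,2) by (intro mult_left_mono) auto
  finally show ?case by simp
qed simp

lemma knorm_power:
  assumes "1 \<le> k" "0 \<le> a" "0 \<le> b"
  shows "knorm k a b ^ k = a ^ k + b ^ k"
  unfolding knorm_def using assms by simp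

lemma knorm_commute: "knorm k a b = knorm k b a"
  unfolding knorm_def by (simp add: add.commute)

lemma knorm_ge_left:
  assumes "1 \<le> k" "0 \<le> a" "0 \<le> b"
  shows "a \<le> knorm k a b"
proof -
  have "root k (a ^ k) \<le> knorm k a b"
    unfolding knorm_def using assms by simp
  then show ?thesis using assms by (simp add: real_root_power_cancel)
qed

lemma knorm_le_add:
  assumes "1 \<le> k" "0 \<le> a" "0 \<le> b"
  shows "knorm k a b \<le> a + b"
proof -
  have "knorm k a b \<le> root k ((a + b) ^ k)"
    unfolding knorm_def using assms by (simp add: add_power_le_power_add)
  then show ?thesis using assms by (simp add: real_root_power_cancel)
qed

lemma binomial_sum_both_below_le_knorm:
  fixes a b :: real
  assumes "1 \<le> k" "0 \<le> a" "0 \<le> b"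
  shows "binomial_sum s b a (\<lambda>i. s - i < k \<and> i < k)
    \<le> binomial_sum s (knorm k a b) (a + b - knorm k a b) (\<lambda>i. i < k)"
  using assms knorm_ge_left[of k a b] knorm_ge_left[of k b a] knorm_le_add[of k a b]
  by (intro binomial_sum_both_below_le) (auto simp: knorm_power knorm_commute)

lemma balls_prob_max_load_from_less_eq_sum:
  fixes r :: "nat \<Rightarrow> real" and n m k j :: nat
  assumes "1 \<le> j" "j + 1 \<le> m"
  defines "rest_below g \<equiv> \<forall>l\<in>{j + 2..m}. load n g l < k"
  shows "balls_prob n m r (\<lambda>f. max_load_from n m f j < k)
      = (\<Sum>g\<in>{..<n} \<rightarrow>\<^sub>E ({1..m} - {j + 1}). if rest_below g
          then (\<Prod>t\<in>{t\<in>{..<n}. g t \<noteq> j}. r (g t))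
            * binomial_sum (load n g j) (r (j + 1)) (r j) (\<lambda>i. load n g j - i < k \<and> i < k)
          else 0)" (is "_ = ?below_from_j")
    and "balls_prob n m r (\<lambda>f. max_load_from n m f (j + 1) < k)
      = (\<Sum>g\<in>{..<n} \<rightarrow>\<^sub>E ({1..m} - {j + 1}). if rest_below g
          then (\<Prod>t\<in>{t\<in>{..<n}. g t \<noteq> j}. r (g t))
            * binomial_sum (load n g j) (r (j + 1)) (r j) (\<lambda>i. i < k)
          else 0)" (is "_ = ?below_from_next")
proof -
  have rest_below_local:
    "rest_below f = rest_below f'" if "\<And>l. l \<noteq> j \<Longrightarrow> l \<noteq> j + 1 \<Longrightarrow> load n f l = load n f' l" for f f'
    using that unfolding rest_below_def by auto
  have "{j..m} = {j, j + 1} \<union> {j + 2..m}" "{j + 1..m} = insert (j + 1) {j + 2..m}"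
    using assms(1,2) by auto
  then have events:
    "max_load_from n m f j < k \<longleftrightarrow> rest_below f \<and> load n f j < k \<and> load n f (j + 1) < k"
    "max_load_from n m f (j + 1) < k \<longleftrightarrow> rest_below f \<and> load n f (j + 1) < k" for f
    using assms(1,2) by (auto simp: max_load_from_less_iff rest_below_def)
  show "balls_prob n m r (\<lambda>f. max_load_from n m f j < k) = ?below_from_j"
    unfolding events
    by (rule balls_prob_condition_on_pair[where Q="\<lambda>x y. x < k \<and> y < k", OF assms(1,2) rest_below_local])
  show "balls_prob n m r (\<lambda>f. max_load_from n m f (j + 1) < k) = ?below_from_next"
    unfolding events
    by (rule balls_prob_condition_on_pair[where Q="\<lambda>x y. y < k", OF assms(1,2) rest_below_local])
qed

theorem lemma12:
  fixes n m k j :: nat and q :: "nat \<Rightarrow> real"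
  assumes "m \<ge> 2" and "k \<ge> 1"
    and "\<forall>l \<in> {1..m}. q l \<ge> 0" and "(\<Sum>l=1..m. q l) = 1"
    and "j \<in> {1..m-1}"
  shows "balls_prob n m q (\<lambda>f. max_load_from n m f j < k)
         \<le> balls_prob n m (merge_dist k j q) (\<lambda>f. max_load_from n m f (j+1) < k)"
proof -
  have j: "1 \<le> j" "j + 1 \<le> m" using assms(5) by auto
  let ?q' = "merge_dist k j q" and ?G = "{..<n} \<rightarrow>\<^sub>E ({1..m} - {j + 1})"
  have weight_merge: "(\<Prod>t\<in>{t\<in>{..<n}. g t \<noteq> j}. ?q' (g t)) = (\<Prod>t\<in>{t\<in>{..<n}. g t \<noteq> j}. q (g t))"
    if "g \<in> ?G" for g
    using that by (intro prod.cong) (auto simp: merge_dist_def PiE_iff)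
  have weight_nonneg: "0 \<le> (\<Prod>t\<in>{t\<in>{..<n}. g t \<noteq> j}. q (g t))" if "g \<in> ?G" for g
    using that assms(3) by (intro prod_nonneg) (auto simp: PiE_iff)
  have "0 \<le> q j" "0 \<le> q (j + 1)"
    using j assms(3) by auto
  then show ?thesis
    unfolding balls_prob_max_load_from_less_eq_sum[OF j]
    using weight_merge weight_nonneg binomial_sum_both_below_le_knorm[OF assms(2)]
    by (intro sum_mono) (simp add: merge_dist_def mult_left_mono)
qed

end
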